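(* Let $\theta$ be an irrational number whose best rational approximants $(p_n/q_n)_{n\ge0}$ satisfy $q_n^{-1}\log q_{n+1}\to\infty$ as $n\to\infty$. For any sequence of positive numbers $(\varepsilon_p)_{p\ge1}$ converging to $0$, there exist a subsequence $(q'_n)_{n\ge0}$ of $(q_n)_{n\ge0}$ and a strictly increasing sequence of positive integers $(N_p)_{p\ge1}$ such that for every $p\ge1$, \[|1-e^{2\pi i N_p\theta}|+\sum_{n\ge0}|1-e^{2\pi i q'_nN_p\theta}|\,p^{q'_n}\le\varepsilon_p.\]
   Context: Best rational approximants $p_n/q_n$ of an irrational $\theta$ are its continued fraction convergents, with $\gcd(p_n,q_n)=1$, $q_n\ge0$. A subsequence $q'$ of $(q_n)$ means $q'_n=q_{k_n}$ with $k_n$ strictly increasing. *)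

theory Defs
  imports "HOL-Analysis.Analysis"
begin

fun cf_rem :: "real \<Rightarrow> nat \<Rightarrow> real" where
  "cf_rem x 0 = x"
| "cf_rem x (Suc n) = 1 / frac (cf_rem x n)"

definition cf_a :: "real \<Rightarrow> nat \<Rightarrow> int" where
  "cf_a x n = \<lfloor>cf_rem x n\<rfloor>"

text \<open>Denominators of the convergents p_n/q_n:
  q_0 = 1, q_1 = a_1, q_(n+2) = a_(n+2) q_(n+1) + q_n  (i.e. q_(-1) = 0).\<close>

fun cf_q :: "real \<Rightarrow> nat \<Rightarrow> int" where
  "cf_q x 0 = 1"
| "cf_q x (Suc 0) = cf_a x 1"
| "cf_q x (Suc (Suc n)) = cf_a x (n + 2) * cf_q x (Suc n) + cf_q x n"

end

theory Submission
  imports Defs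
begin

(* Write ||x|| for the distance from x to the nearest integer. Then |1 - e^(2 pi i x)| <= 2 pi ||x||,
   and the convergent estimate ||c q_j theta|| <= |c| / q_(j+1) together with log q_(j+1) / q_j -> oo
   gives ||q_i q_j theta|| <= q_i r^(q_j) for any fixed r > 0 once j is large. Choose rates r_m -> 0
   fast in terms of eps_1, ..., eps_m, then indices k_m >= m so large that
   1 / q_(k_m + 1) <= r_m^(q_(k_m)), and take q'_n = q_(k_n), N_p = q_(k_p). In the n-th term of
   the sum for p the factor p^(q'_n) is absorbed by the power of r_(max n p), so the terms are
   dominated by eps_p 2^(-n) / 4. *)

lemma norm_one_minus_exp_i_le: "cmod (1 - exp (\<i> * complex_of_real y)) \<le> \<bar>y\<bar>"
proof -
  have "exp (\<i> * complex_of_real y) = Complex (cos y) (sin y)"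
    by (simp add: exp_Euler cos_of_real sin_of_real complex_eq_iff)
  then have "(cmod (1 - exp (\<i> * complex_of_real y)))\<^sup>2 = (1 - cos y)\<^sup>2 + (sin y)\<^sup>2"
    by (simp add: cmod_power2)
  also have "\<dots> = 2 - 2 * cos y"
    using sin_cos_squared_add[of y] by (simp add: power2_eq_square algebra_simps)
  also have "\<dots> = (2 * \<bar>sin (y / 2)\<bar>)\<^sup>2"
    using cos_double_sin[of "y / 2"] by (simp add: power2_eq_square)
  also have "\<dots> \<le> \<bar>y\<bar>\<^sup>2"
    using abs_sin_x_le_abs_x[of "y / 2"] by (intro power_mono) auto
  finally show ?thesis
    using power2_le_imp_le abs_ge_zero by blast
qed

lemma norm_one_minus_exp_2pi_le:
  "cmod (1 - exp (2 * pi * \<i> * complex_of_real x)) \<le> 2 * pi * \<bar>x - of_int m\<bar>"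
proof -
  have "exp (2 * pi * \<i> * of_int m) = 1"
    using exp_integer_2pi[of "of_int m"] by (simp add: mult_ac)
  moreover have "2 * pi * \<i> * complex_of_real x
      = \<i> * complex_of_real (2 * pi * (x - of_int m)) + 2 * pi * \<i> * of_int m"
    by (simp add: field_simps)
  ultimately have "exp (2 * pi * \<i> * complex_of_real x) = exp (\<i> * complex_of_real (2 * pi * (x - of_int m)))"
    by (simp add: exp_add)
  then show ?thesis
    using norm_one_minus_exp_i_le[of "2 * pi * (x - of_int m)"] by (simp add: abs_mult)
qed

lemma cf_rem_not_Rats: "\<theta> \<notin> \<rat> \<Longrightarrow> cf_rem \<theta> n \<notin> \<rat>"
proof (induction n)
  case (Suc n)
  show ?case
  proof
    assume "cf_rem \<theta> (Suc n) \<in> \<rat>"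
    then have "frac (cf_rem \<theta> n) \<in> \<rat>"
      by (metis Rats_inverse cf_rem.simps(2) inverse_eq_divide inverse_inverse_eq)
    then have "cf_rem \<theta> n \<in> \<rat>"
      by (metis Rats_add Rats_of_int frac_def diff_add_cancel)
    with Suc show False by simp
  qed
qed simp

lemma cf_rem_not_Ints: "\<theta> \<notin> \<rat> \<Longrightarrow> cf_rem \<theta> n \<notin> \<int>"
  using cf_rem_not_Rats Ints_subset_Rats by blast

lemma cf_a_Suc_ge_1: "\<theta> \<notin> \<rat> \<Longrightarrow> 1 \<le> cf_a \<theta> (Suc n)"
proof -
  assume "\<theta> \<notin> \<rat>"
  then have "0 < frac (cf_rem \<theta> n)" "frac (cf_rem \<theta> n) < 1"
    using cf_rem_not_Ints frac_lt_1 by auto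
  then have "1 < cf_rem \<theta> (Suc n)"
    by (simp add: less_divide_eq)
  then show ?thesis
    by (simp add: cf_a_def one_le_floor)
qed

lemma cf_q_ge_1_and_Suc_mono:
  assumes "\<theta> \<notin> \<rat>"
  shows "1 \<le> cf_q \<theta> n \<and> cf_q \<theta> n \<le> cf_q \<theta> (Suc n) \<and> (1 \<le> n \<longrightarrow> cf_q \<theta> n < cf_q \<theta> (Suc n))"
proof (induction n)
  case 0
  then show ?case
    using cf_a_Suc_ge_1[OF assms, of 0] by simp
next
  case (Suc n)
  have "cf_q \<theta> (Suc n) \<le> cf_a \<theta> (Suc (Suc n)) * cf_q \<theta> (Suc n)"
    using cf_a_Suc_ge_1[OF assms, of "Suc n"] Suc.IH by (simp add: mult_le_cancel_right1)
  moreover have "cf_q \<theta> (Suc (Suc n)) = cf_a \<theta> (Suc (Suc n)) * cf_q \<theta> (Suc n) + cf_q \<theta> n"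
    by (simp add: numeral_2_eq_2)
  ultimately show ?case
    using Suc.IH by linarith
qed

lemma cf_q_ge_1: "\<theta> \<notin> \<rat> \<Longrightarrow> 1 \<le> cf_q \<theta> n"
  using cf_q_ge_1_and_Suc_mono by blast

lemma cf_q_mono: "\<theta> \<notin> \<rat> \<Longrightarrow> i \<le> j \<Longrightarrow> cf_q \<theta> i \<le> cf_q \<theta> j"
  using lift_Suc_mono_le[of "cf_q \<theta>"] cf_q_ge_1_and_Suc_mono by blast

lemma cf_q_strict_mono: "\<theta> \<notin> \<rat> \<Longrightarrow> 1 \<le> i \<Longrightarrow> i < j \<Longrightarrow> cf_q \<theta> i < cf_q \<theta> j"
  by (rule lift_Suc_mono_less_ivl[of "{1..}"]) (use cf_q_ge_1_and_Suc_mono in auto)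

fun cf_p :: "real \<Rightarrow> nat \<Rightarrow> int" where
  "cf_p x 0 = cf_a x 0"
| "cf_p x (Suc 0) = cf_a x 1 * cf_a x 0 + 1"
| "cf_p x (Suc (Suc n)) = cf_a x (n + 2) * cf_p x (Suc n) + cf_p x n"

definition cf_err :: "real \<Rightarrow> nat \<Rightarrow> real" where
  "cf_err x n = of_int (cf_q x n) * x - of_int (cf_p x n)"

lemma cf_err_Suc_Suc: "cf_err x (Suc (Suc n)) = of_int (cf_a x (n + 2)) * cf_err x (Suc n) + cf_err x n"
  by (simp add: cf_err_def algebra_simps)

lemma cf_err_Suc:
  assumes "\<theta> \<notin> \<rat>"
  shows "cf_err \<theta> (Suc n) = - frac (cf_rem \<theta> (Suc n)) * cf_err \<theta> n"
proof (induction n)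
  case 0
  have "0 < frac \<theta>"
    using cf_rem_not_Ints[OF assms, of 0] by simp
  then show ?case
    by (simp add: cf_err_def cf_a_def frac_def field_simps)
next
  case (Suc n)
  define x where "x = cf_rem \<theta> (Suc (Suc n))"
  have "x * frac (cf_rem \<theta> (Suc n)) = 1"
    using cf_rem_not_Ints[OF assms, of "Suc n"] by (simp add: x_def)
  with Suc have "cf_err \<theta> n = - x * cf_err \<theta> (Suc n)"
    by (simp add: algebra_simps)
  then have "cf_err \<theta> (Suc (Suc n)) = - (x - of_int (cf_a \<theta> (n + 2))) * cf_err \<theta> (Suc n)"
    using cf_err_Suc_Suc[of \<theta> n] by (simp add: algebra_simps)
  then show ?case
    by (simp add: x_def frac_def cf_a_def)
qed

lemma cf_q_cf_err_det:
  "\<bar>of_int (cf_q \<theta> (Suc n)) * cf_err \<theta> n - of_int (cf_q \<theta> n) * cf_err \<theta> (Suc n)\<bar> = 1"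
proof (induction n)
  case 0
  then show ?case
    by (simp add: cf_err_def algebra_simps)
next
  case (Suc n)
  have "of_int (cf_q \<theta> (Suc (Suc n))) * cf_err \<theta> (Suc n) - of_int (cf_q \<theta> (Suc n)) * cf_err \<theta> (Suc (Suc n))
      = - (of_int (cf_q \<theta> (Suc n)) * cf_err \<theta> n - of_int (cf_q \<theta> n) * cf_err \<theta> (Suc n))"
    by (simp only: cf_err_Suc_Suc cf_q.simps of_int_add of_int_mult) (simp add: algebra_simps)
  with Suc show ?case
    by simp
qed

lemma abs_cf_err_le:
  assumes "\<theta> \<notin> \<rat>"
  shows "\<bar>cf_err \<theta> n\<bar> \<le> 1 / of_int (cf_q \<theta> (Suc n))"
proof -
  define t where "t = frac (cf_rem \<theta> (Suc n))"
  have t: "0 < t"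
    using cf_rem_not_Ints[OF assms, of "Suc n"] by (simp add: t_def)
  have q: "1 \<le> cf_q \<theta> n" "1 \<le> cf_q \<theta> (Suc n)"
    using cf_q_ge_1[OF assms] by auto
  have "of_int (cf_q \<theta> (Suc n)) * cf_err \<theta> n - of_int (cf_q \<theta> n) * cf_err \<theta> (Suc n)
      = cf_err \<theta> n * (of_int (cf_q \<theta> (Suc n)) + of_int (cf_q \<theta> n) * t)"
    unfolding cf_err_Suc[OF assms] t_def by (simp add: algebra_simps)
  then have "1 = \<bar>cf_err \<theta> n\<bar> * (of_int (cf_q \<theta> (Suc n)) + of_int (cf_q \<theta> n) * t)"
    using cf_q_cf_err_det[of \<theta> n] t q by (simp add: abs_mult)
  also have "\<dots> \<ge> \<bar>cf_err \<theta> n\<bar> * of_int (cf_q \<theta> (Suc n))"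
    using t q by (intro mult_left_mono) auto
  finally show ?thesis
    using q by (simp add: le_divide_eq)
qed

lemma norm_one_minus_exp_cf_q_le:
  assumes "\<theta> \<notin> \<rat>"
  shows "cmod (1 - exp (2 * pi * \<i> * of_int c * of_int (cf_q \<theta> j) * of_real \<theta>))
           \<le> 2 * pi * \<bar>of_int c\<bar> / of_int (cf_q \<theta> (Suc j))"
proof -
  have "cmod (1 - exp (2 * pi * \<i> * of_int c * of_int (cf_q \<theta> j) * of_real \<theta>))
     \<le> 2 * pi * \<bar>of_int c * of_int (cf_q \<theta> j) * \<theta> - of_int (c * cf_p \<theta> j)\<bar>"
    using norm_one_minus_exp_2pi_le[of "of_int c * of_int (cf_q \<theta> j) * \<theta>" "c * cf_p \<theta> j"]
    by (simp add: mult_ac)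
  also have "\<dots> = 2 * pi * \<bar>of_int c\<bar> * \<bar>cf_err \<theta> j\<bar>"
    by (simp add: cf_err_def abs_mult[symmetric] algebra_simps)
  also have "\<dots> \<le> 2 * pi * \<bar>of_int c\<bar> * (1 / of_int (cf_q \<theta> (Suc j)))"
    using abs_cf_err_le[OF assms] by (intro mult_left_mono) auto
  finally show ?thesis
    by simp
qed

lemma of_nat_mult_power_le:
  fixes s :: real
  assumes "1 \<le> n" "0 \<le> s" "s \<le> 1 / 2"
  shows "real n * s ^ n \<le> s"
proof -
  obtain m where n: "n = Suc m"
    using assms(1) by (cases n) auto
  have "real n \<le> 2 ^ m"
    using less_exp[of m] unfolding n by (metis Suc_leI of_nat_le_iff of_nat_numeral of_nat_power)
  moreover have "s ^ m \<le> (1 / 2) ^ m"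
    using assms by (intro power_mono) auto
  ultimately have "real n * s ^ m \<le> 2 ^ m * (1 / 2) ^ m"
    using assms(2) by (intro mult_mono) auto
  then have "real n * s ^ m \<le> 1"
    by (simp add: power_one_over)
  then show ?thesis
    using assms(2) mult_left_le[of "real n * s ^ m" s] by (simp add: n mult_ac)
qed

(* Bounds the n-th summand for p, with {i, j} = {k n, k p}, i <= j and A = q_(k n). *)
lemma norm_one_minus_exp_cf_q_mult_power_le:
  assumes irr: "\<theta> \<notin> \<rat>" and A: "nat (cf_q \<theta> i) \<le> A" "A \<le> nat (cf_q \<theta> j)"
    and growth: "1 / of_int (cf_q \<theta> (Suc j)) \<le> r ^ nat (cf_q \<theta> j)"
    and r: "0 \<le> r" "r \<le> 1" "real p * r \<le> 1 / 2"
  shows "cmod (1 - exp (2 * pi * \<i> * of_int (cf_q \<theta> i) * of_int (cf_q \<theta> j) * of_real \<theta>)) * real p ^ A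
           \<le> 2 * pi * (real p * r)"
proof -
  have q: "1 \<le> cf_q \<theta> i" "1 \<le> cf_q \<theta> (Suc j)"
    using cf_q_ge_1[OF irr] by auto
  then have "1 \<le> A" "of_int (cf_q \<theta> i) \<le> real A"
    using A by linarith+
  have "cmod (1 - exp (2 * pi * \<i> * of_int (cf_q \<theta> i) * of_int (cf_q \<theta> j) * of_real \<theta>))
      \<le> 2 * pi * of_int (cf_q \<theta> i) * (1 / of_int (cf_q \<theta> (Suc j)))"
    using norm_one_minus_exp_cf_q_le[OF irr, of "cf_q \<theta> i" j] q by simp
  also have "\<dots> \<le> 2 * pi * real A * r ^ A"
    using \<open>of_int (cf_q \<theta> i) \<le> real A\<close> q growth power_decreasing[OF A(2) r(1,2)]
    by (intro mult_mono) auto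
  finally have "cmod (1 - exp (2 * pi * \<i> * of_int (cf_q \<theta> i) * of_int (cf_q \<theta> j) * of_real \<theta>)) * real p ^ A
      \<le> 2 * pi * real A * r ^ A * real p ^ A"
    by (rule mult_right_mono) simp
  also have "\<dots> = 2 * pi * (real A * (real p * r) ^ A)"
    by (simp add: power_mult_distrib)
  also have "\<dots> \<le> 2 * pi * (real p * r)"
    using of_nat_mult_power_le[OF \<open>1 \<le> A\<close>, of "real p * r"] r by simp
  finally show ?thesis .
qed

lemma summable_suminf_le_half_powers:
  fixes f :: "nat \<Rightarrow> real"
  assumes "\<And>n. 0 \<le> f n" "\<And>n. f n \<le> c * (1 / 2) ^ n"
  shows "summable f" "suminf f \<le> 2 * c"
proof -
  have geometric: "summable (\<lambda>n. c * (1 / 2 :: real) ^ n)"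
    by (intro summable_mult summable_geometric) simp
  then show "summable f"
    using assms by (intro summable_comparison_test'[OF geometric, of 0]) auto
  then have "suminf f \<le> (\<Sum>n. c * (1 / 2 :: real) ^ n)"
    using geometric assms(2) by (intro suminf_le) auto
  also have "\<dots> = 2 * c"
    by (subst suminf_mult[OF summable_geometric]) (auto simp: suminf_geometric)
  finally show "suminf f \<le> 2 * c" .
qed

lemma eventually_inverse_Suc_le_power:
  fixes q :: "nat \<Rightarrow> int" and r :: real
  assumes growth: "filterlim (\<lambda>n. ln (real_of_int (q (Suc n))) / of_int (q n)) at_top sequentially"
    and q: "\<And>n. 0 < q n" and r: "0 < r"
  shows "eventually (\<lambda>n. 1 / of_int (q (Suc n)) \<le> r ^ nat (q n)) sequentially"
proof -
  have "eventually (\<lambda>n. ln (1 / r) \<le> ln (of_int (q (Suc n))) / of_int (q n)) sequentially"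
    using growth by (simp add: filterlim_at_top)
  then show ?thesis
  proof eventually_elim
    case (elim n)
    have "ln ((1 / r) ^ nat (q n)) = of_int (q n) * ln (1 / r)"
      using q[of n] r by (simp add: ln_realpow)
    also have "\<dots> \<le> ln (of_int (q (Suc n)))"
      using elim q[of n] by (simp add: le_divide_eq mult.commute)
    finally have "(1 / r) ^ nat (q n) \<le> of_int (q (Suc n))"
      using q[of "Suc n"] r by (subst (asm) ln_le_cancel_iff) auto
    then have "1 / of_int (q (Suc n)) \<le> 1 / (1 / r) ^ nat (q n)"
      using r q[of "Suc n"] by (intro divide_left_mono) auto
    then show ?case
      by (simp add: power_one_over)
  qed
qed

lemma exists_rates:
  fixes \<epsilon> :: "nat \<Rightarrow> real"
  assumes eps_pos: "\<And>p. 1 \<le> p \<Longrightarrow> 0 < \<epsilon> p"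
  obtains r :: "nat \<Rightarrow> real" where "\<And>m. 0 < r m" "\<And>m. real m * r m \<le> 1 / 2"
    "\<And>p m. 1 \<le> p \<Longrightarrow> p \<le> m \<Longrightarrow> 2 * pi * real m * r m \<le> \<epsilon> p / (4 * 2 ^ m)"
proof
  define e where "e m = Min (insert 1 (\<epsilon> ` {1..m}))" for m
  have e_pos: "0 < e m" for m
    unfolding e_def using eps_pos by (subst Min_gr_iff) auto
  have e_le_1: "e m \<le> 1" for m
    unfolding e_def by (intro Min_le) auto
  have e_le: "e m \<le> \<epsilon> p" if "1 \<le> p" "p \<le> m" for m p
    unfolding e_def using that by (intro Min_le) auto
  define r where "r m = e m / (8 * pi * (real m + 1) * 2 ^ m)" for m
  show r_pos: "0 < r m" for m
    unfolding r_def using e_pos by simp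
  have "2 * pi * real m * r m = real m / (real m + 1) * (e m / (4 * 2 ^ m))" for m
    by (simp add: r_def divide_simps)
  also have "\<dots> m \<le> e m / (4 * 2 ^ m)" for m
    using e_pos[of m] by (intro mult_left_le_one_le) auto
  finally have r_e: "2 * pi * real m * r m \<le> e m / (4 * 2 ^ m)" for m .
  then show "2 * pi * real m * r m \<le> \<epsilon> p / (4 * 2 ^ m)" if "1 \<le> p" "p \<le> m" for p m
    using e_le[OF that] by (smt (verit) divide_right_mono zero_less_power)
  show "real m * r m \<le> 1 / 2" for m
  proof -
    have "e m / (4 * 2 ^ m) \<le> 1"
      using e_le_1[of m] two_realpow_ge_one[of m] by (simp add: divide_le_eq del: one_le_power)
    moreover have "6 * (real m * r m) \<le> 2 * pi * (real m * r m)"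
      using pi_gt3 r_pos[of m] by (intro mult_right_mono) auto
    ultimately show ?thesis
      using r_e[of m] by (simp only: mult.assoc)
  qed
qed

lemma exists_strict_mono_above:
  fixes J :: "nat \<Rightarrow> nat"
  obtains k :: "nat \<Rightarrow> nat" where "strict_mono k" "\<And>m. J m \<le> k m"
proof
  show "strict_mono (\<lambda>m. m + (\<Sum>i\<le>m. J i))"
    by (simp add: strict_mono_Suc_iff)
  show "J m \<le> m + (\<Sum>i\<le>m. J i)" for m
    using member_le_sum[of m "{..m}" J] by simp
qed

locale cf_selection =
  fixes \<theta> :: real and \<epsilon> :: "nat \<Rightarrow> real" and r :: "nat \<Rightarrow> real" and k :: "nat \<Rightarrow> nat"
  assumes irrational: "\<theta> \<notin> \<rat>"
    and r_pos: "0 < r m"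
    and r_half: "real m * r m \<le> 1 / 2"
    and r_eps: "1 \<le> p \<Longrightarrow> p \<le> m \<Longrightarrow> 2 * pi * real m * r m \<le> \<epsilon> p / (4 * 2 ^ m)"
    and k_strict_mono: "strict_mono k"
    and k_growth: "1 / of_int (cf_q \<theta> (Suc (k m))) \<le> r m ^ nat (cf_q \<theta> (k m))"
begin

lemma r_le_1: "1 \<le> m \<Longrightarrow> r m \<le> 1"
proof -
  assume "1 \<le> m"
  then have "r m \<le> real m * r m"
    using r_pos[of m] by (simp add: mult_le_cancel_right1)
  then show ?thesis
    using r_half[of m] by linarith
qed

lemma eps_nonneg: "1 \<le> p \<Longrightarrow> 0 \<le> \<epsilon> p"
proof -
  assume p: "1 \<le> p"
  have "0 \<le> 2 * pi * real p * r p"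
    using r_pos[of p] by simp
  then have "0 \<le> \<epsilon> p / (4 * 2 ^ p)"
    using r_eps[OF p order.refl] by linarith
  then show ?thesis
    using two_realpow_ge_one[of p] by (simp add: zero_le_divide_iff)
qed

lemma of_nat_nat_cf_q: "of_nat (nat (cf_q \<theta> j)) = (of_int (cf_q \<theta> j) :: 'a :: ring_1)"
  using cf_q_ge_1[OF irrational, of j] by simp

lemma nat_cf_q_k_mono: "m \<le> n \<Longrightarrow> nat (cf_q \<theta> (k m)) \<le> nat (cf_q \<theta> (k n))"
  using k_strict_mono cf_q_mono[OF irrational] by (simp add: strict_mono_less_eq nat_mono)

lemma summand_le:
  assumes p: "1 \<le> p"
  shows "cmod (1 - exp (2 * pi * \<i> * of_int (cf_q \<theta> (k n)) * of_nat (nat (cf_q \<theta> (k p))) * of_real \<theta>))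
           * real p ^ nat (cf_q \<theta> (k n)) \<le> \<epsilon> p / 4 * (1 / 2) ^ n"
proof (cases "n < p")
  case True
  have "cmod (1 - exp (2 * pi * \<i> * of_int (cf_q \<theta> (k n)) * of_nat (nat (cf_q \<theta> (k p))) * of_real \<theta>))
      * real p ^ nat (cf_q \<theta> (k n)) \<le> 2 * pi * (real p * r p)"
    unfolding of_nat_nat_cf_q
    by (rule norm_one_minus_exp_cf_q_mult_power_le[OF irrational order.refl nat_cf_q_k_mono k_growth])
      (use True r_pos[of p] r_le_1[OF p] r_half[of p] in auto)
  also have "\<dots> \<le> \<epsilon> p / 4 * (1 / 2) ^ p"
    using r_eps[OF p order.refl] by (simp add: mult.assoc power_one_over)
  also have "\<dots> \<le> \<epsilon> p / 4 * (1 / 2) ^ n"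
    using True eps_nonneg[OF p] by (intro mult_left_mono power_decreasing) auto
  finally show ?thesis .
next
  case False
  then have pn: "p \<le> n"
    by simp
  have "real p * r n \<le> real n * r n"
    using pn r_pos[of n] by (intro mult_right_mono) auto
  then have pr: "real p * r n \<le> 1 / 2"
    using r_half[of n] by linarith
  have "2 * pi * \<i> * of_int (cf_q \<theta> (k n)) * of_nat (nat (cf_q \<theta> (k p))) * of_real \<theta>
      = 2 * pi * \<i> * of_int (cf_q \<theta> (k p)) * of_int (cf_q \<theta> (k n)) * (of_real \<theta> :: complex)"
    by (simp add: of_nat_nat_cf_q)
  then have "cmod (1 - exp (2 * pi * \<i> * of_int (cf_q \<theta> (k n)) * of_nat (nat (cf_q \<theta> (k p))) * of_real \<theta>))
      * real p ^ nat (cf_q \<theta> (k n))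
      = cmod (1 - exp (2 * pi * \<i> * of_int (cf_q \<theta> (k p)) * of_int (cf_q \<theta> (k n)) * of_real \<theta>))
      * real p ^ nat (cf_q \<theta> (k n))"
    by (simp only:)
  also have "\<dots> \<le> 2 * pi * (real p * r n)"
    by (rule norm_one_minus_exp_cf_q_mult_power_le[OF irrational nat_cf_q_k_mono[OF pn] order.refl k_growth])
      (use p pn r_pos[of n] r_le_1[of n] pr in auto)
  also have "\<dots> \<le> 2 * pi * real n * r n"
    using \<open>real p * r n \<le> real n * r n\<close> by (simp add: mult.assoc)
  also have "\<dots> \<le> \<epsilon> p / 4 * (1 / 2) ^ n"
    using r_eps[OF p pn] by (simp add: power_one_over)
  finally show ?thesis .
qed

lemma first_term_le:
  assumes p: "1 \<le> p"
  shows "cmod (1 - exp (2 * pi * \<i> * of_nat (nat (cf_q \<theta> (k p))) * of_real \<theta>)) \<le> \<epsilon> p / 4"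
proof -
  have "r p ^ nat (cf_q \<theta> (k p)) \<le> r p ^ 1"
    using r_pos[of p] r_le_1[OF p] cf_q_ge_1[OF irrational, of "k p"] by (intro power_decreasing) auto
  then have "1 / of_int (cf_q \<theta> (Suc (k p))) \<le> r p"
    using k_growth[of p] by simp
  have "cmod (1 - exp (2 * pi * \<i> * of_nat (nat (cf_q \<theta> (k p))) * of_real \<theta>))
      \<le> 2 * pi * (1 / of_int (cf_q \<theta> (Suc (k p))))"
    using norm_one_minus_exp_cf_q_le[OF irrational, of 1 "k p"] by (simp add: of_nat_nat_cf_q)
  also have "\<dots> \<le> 2 * pi * (real p * r p)"
    using \<open>1 / of_int (cf_q \<theta> (Suc (k p))) \<le> r p\<close> p r_pos[of p]
    by (intro mult_left_mono) (auto simp: mult_le_cancel_right1 intro: order_trans)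
  also have "\<dots> \<le> \<epsilon> p / (4 * 2 ^ p)"
    using r_eps[OF p order.refl] by (simp add: mult.assoc)
  also have "\<dots> \<le> \<epsilon> p / 4"
    using eps_nonneg[OF p] by (intro divide_left_mono) auto
  finally show ?thesis .
qed

lemma summable_and_sum_le_eps:
  assumes p: "1 \<le> p"
  defines "T \<equiv> \<lambda>n. cmod (1 - exp (2 * pi * \<i> * of_int (cf_q \<theta> (k n)) * of_nat (nat (cf_q \<theta> (k p))) * of_real \<theta>))
                        * real p ^ nat (cf_q \<theta> (k n))"
  shows "summable T"
    and "cmod (1 - exp (2 * pi * \<i> * of_nat (nat (cf_q \<theta> (k p))) * of_real \<theta>)) + suminf T \<le> \<epsilon> p"
proof -
  show "summable T"
    using summable_suminf_le_half_powers(1)[OF _ summand_le[OF p]] by (simp add: T_def)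
  have "suminf T \<le> 2 * (\<epsilon> p / 4)"
    using summable_suminf_le_half_powers(2)[OF _ summand_le[OF p]] by (simp add: T_def)
  then show "cmod (1 - exp (2 * pi * \<i> * of_nat (nat (cf_q \<theta> (k p))) * of_real \<theta>)) + suminf T \<le> \<epsilon> p"
    using first_term_le[OF p] eps_nonneg[OF p] by linarith
qed

lemma cf_q_selected_strict_mono_on: "strict_mono_on {1..} (\<lambda>p. nat (cf_q \<theta> (k p)))"
proof (rule strict_mono_onI)
  fix a b :: nat
  assume "a \<in> {1..}" "a < b"
  then have "1 \<le> k a" "k a < k b"
    using k_strict_mono strict_mono_imp_increasing[OF k_strict_mono, of a] by (auto simp: strict_mono_def)
  then show "nat (cf_q \<theta> (k a)) < nat (cf_q \<theta> (k b))"
    using cf_q_strict_mono[OF irrational] cf_q_ge_1[OF irrational, of "k a"] by fastforce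
qed

end

theorem lemma2p5:
  fixes \<theta> :: real and \<epsilon> :: "nat \<Rightarrow> real"
  assumes irr: "\<theta> \<notin> \<rat>"
    and growth: "filterlim (\<lambda>n. ln (real_of_int (cf_q \<theta> (Suc n))) / real_of_int (cf_q \<theta> n))
                   at_top sequentially"
    and eps_pos: "\<And>p. p \<ge> 1 \<Longrightarrow> \<epsilon> p > 0"
    and eps_lim: "\<epsilon> \<longlonglongrightarrow> 0"
  shows "\<exists>k :: nat \<Rightarrow> nat. \<exists>N :: nat \<Rightarrow> nat.
           strict_mono k \<and> strict_mono_on {1..} N \<and> (\<forall>p\<ge>1. N p > 0) \<and>
           (\<forall>p\<ge>1.
              summable (\<lambda>n. cmod (1 - exp (2 * pi * \<i> * of_int (cf_q \<theta> (k n)) * of_nat (N p) * of_real \<theta>))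
                              * real p ^ nat (cf_q \<theta> (k n))) \<and>
              cmod (1 - exp (2 * pi * \<i> * of_nat (N p) * of_real \<theta>))
              + (\<Sum>n. cmod (1 - exp (2 * pi * \<i> * of_int (cf_q \<theta> (k n)) * of_nat (N p) * of_real \<theta>))
                        * real p ^ nat (cf_q \<theta> (k n)))
              \<le> \<epsilon> p)"
proof -
  obtain r where r_pos: "\<And>m. 0 < r m" and r_half: "\<And>m. real m * r m \<le> 1 / 2"
    and r_eps: "\<And>p m. 1 \<le> p \<Longrightarrow> p \<le> m \<Longrightarrow> 2 * pi * real m * r m \<le> \<epsilon> p / (4 * 2 ^ m)"
    using exists_rates[of \<epsilon>] eps_pos by blast
  have "\<forall>m. \<exists>j0. \<forall>j\<ge>j0. 1 / of_int (cf_q \<theta> (Suc j)) \<le> r m ^ nat (cf_q \<theta> j)"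
    using eventually_inverse_Suc_le_power[OF growth _ r_pos] cf_q_ge_1[OF irr]
    by (simp add: eventually_sequentially int_one_le_iff_zero_less)
  then obtain J where J: "\<And>m j. J m \<le> j \<Longrightarrow> 1 / of_int (cf_q \<theta> (Suc j)) \<le> r m ^ nat (cf_q \<theta> j)"
    by metis
  obtain k where k: "strict_mono k" "\<And>m. J m \<le> k m"
    using exists_strict_mono_above[of J] by blast
  interpret cf_selection \<theta> \<epsilon> r k
    using irr r_pos r_half r_eps k(1) J[OF k(2)] by unfold_locales
  show ?thesis
    by (rule exI[of _ k], rule exI[of _ "\<lambda>p. nat (cf_q \<theta> (k p))"],
        intro conjI allI impI k(1) cf_q_selected_strict_mono_on summable_and_sum_le_eps)
      (use cf_q_ge_1[OF irr] in \<open>simp add: int_one_le_iff_zero_less\<close>)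
qed

end
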